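(* Let $n$ training samples carry labels in $\{1,\dots,K\}$ with indicator matrix $F\in\mathbb{R}^{K\times n}$. Let the basis $G_1,\dots,G_r$ ($r\le n$) be a subset of the training samples such that every class contains at least one basis vector, and let $F_{G_i}$ be the indicator vector of the class of $G_i$. Let $W\in\mathbb{R}^{r\times n}$ be an entrywise nonnegative similarity matrix with all column sums positive, $S=\operatorname{diag}(\mathbf{1}^TW)$, $\tilde W=WS^{-1}$, and assume $\tilde W$ has full row rank. Let $X^*=F\tilde W^T(\tilde W\tilde W^T)^{-1}$. If $W$ satisfies the ideal bipartite-graph condition, i.e. $W_{ij}=0$ whenever $F_{G_i}\neq F_j$, then the rows of $F$ lie in the row space of $\tilde W$ and zero fitting error is achieved: $F=X^*\tilde W$.
   Context: The columns of $F$ are standard basis vectors of $\mathbb{R}^K$: $F_j=e_k$ iff sample $j$ is in class $k$. $W_{ij}$ is the similarity between basis vector $G_i$ and training sample $j$. $X^*$ is the minimizer of $\|F-X\tilde W\|_F^2$ (normalized RBF network). *)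

theory Defs
  imports "HOL-Analysis.Analysis"
begin

definition indicator_matrix :: "('n \<Rightarrow> 'k) \<Rightarrow> real^'n^'k" where
  "indicator_matrix lab = (\<chi> k j. if lab j = k then 1 else 0)"

definition diag_mat :: "real^'n \<Rightarrow> real^'n^'n" where
  "diag_mat v = (\<chi> i j. if i = j then v $ i else 0)"

definition col_sum_diag :: "real^'n^'r \<Rightarrow> real^'n^'n" where
  "col_sum_diag W = diag_mat (\<chi> j. \<Sum>i\<in>UNIV. W $ i $ j)"

definition normalized_W :: "real^'n^'r \<Rightarrow> real^'n^'r" where
  "normalized_W W = W ** matrix_inv (col_sum_diag W)"

definition X_star :: "real^'n^'k \<Rightarrow> real^'n^'r \<Rightarrow> real^'r^'k" where
  "X_star F Wt = F ** transpose Wt ** matrix_inv (Wt ** transpose Wt)"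

end

theory Submission
  imports Defs
begin

text \<open>Under the ideal condition every column of W~ is supported on the basis vectors of a single
  class, and normalisation makes each column sum to 1. Hence summing the rows of W~ that belong to
  class k recovers row k of F exactly, i.e. F = F_G W~ with F_G the label matrix of the basis.
  So F lies in the row space of W~, and the least-squares solution X* reproduces it:
  X* W~ = F_G (W~ W~^T)(W~ W~^T)^-1 W~ = F, the Gram matrix W~ W~^T being invertible by full row rank.\<close>

lemma matrix_inv_right:
  fixes A :: "'a::semiring_1^'n^'m"
  assumes "invertible A"
  shows "A ** matrix_inv A = mat 1"
  using someI_ex[OF assms[unfolded invertible_def]] by (simp add: matrix_inv_def)

lemma matrix_inv_unique:
  fixes A :: "'a::semiring_1^'n^'n"
  assumes AB: "A ** B = mat 1" and BA: "B ** A = mat 1"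
  shows "matrix_inv A = B"
proof -
  have "invertible A" using AB BA unfolding invertible_def by blast
  have "B = B ** (A ** matrix_inv A)" using matrix_inv_right[OF \<open>invertible A\<close>] by simp
  also have "\<dots> = matrix_inv A" using BA by (simp add: matrix_mul_assoc)
  finally show ?thesis by simp
qed

lemma matrix_mul_diag_mat_nth:
  "(A ** diag_mat d) $ i $ j = A $ i $ j * d $ j"
  by (simp add: matrix_matrix_mult_def diag_mat_def if_distrib sum.delta' cong: if_cong)

lemma matrix_inv_diag_mat:
  assumes "\<forall>j. d $ j \<noteq> 0"
  shows "matrix_inv (diag_mat d) = diag_mat (\<chi> j. inverse (d $ j))"
  by (rule matrix_inv_unique)
    (use assms in \<open>simp_all add: vec_eq_iff matrix_mul_diag_mat_nth, auto simp: diag_mat_def mat_def\<close>)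

lemma normalized_W_nth:
  assumes "\<forall>j. (\<Sum>i\<in>UNIV. W $ i $ j) \<noteq> 0"
  shows "normalized_W W $ i $ j = W $ i $ j / (\<Sum>i\<in>UNIV. W $ i $ j)"
  using assms
  by (simp add: normalized_W_def col_sum_diag_def matrix_inv_diag_mat matrix_mul_diag_mat_nth
      divide_inverse)

lemma column_indicator_matrix_eq_iff:
  "column a (indicator_matrix lab) = column b (indicator_matrix lab) \<longleftrightarrow> lab a = lab b"
proof
  assume "column a (indicator_matrix lab) = column b (indicator_matrix lab)"
  then have "column a (indicator_matrix lab) $ lab b = column b (indicator_matrix lab) $ lab b"
    by simp
  then show "lab a = lab b" by (simp add: column_def indicator_matrix_def split: if_splits)
qed (simp add: column_def indicator_matrix_def)

lemma indicator_matrix_eq_basis_labels_mult: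
  fixes W :: "real^'n^'r" and g :: "'r \<Rightarrow> 'n"
  assumes colsum: "\<forall>j. (\<Sum>i\<in>UNIV. W $ i $ j) \<noteq> 0"
    and ideal: "\<forall>i j. lab (g i) \<noteq> lab j \<longrightarrow> W $ i $ j = 0"
  shows "indicator_matrix lab = indicator_matrix (lab \<circ> g) ** normalized_W W"
proof -
  have "(indicator_matrix (lab \<circ> g) ** normalized_W W) $ k $ j = indicator_matrix lab $ k $ j"
    for k j
  proof -
    have "(indicator_matrix (lab \<circ> g) ** normalized_W W) $ k $ j
        = (\<Sum>i\<in>UNIV. if lab (g i) = k then W $ i $ j else 0) / (\<Sum>i\<in>UNIV. W $ i $ j)"
      using colsum
      by (simp add: matrix_matrix_mult_def indicator_matrix_def normalized_W_nth
          sum_divide_distrib) (auto intro: sum.cong)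
    also have "(\<Sum>i\<in>UNIV. if lab (g i) = k then W $ i $ j else 0)
        = (if lab j = k then \<Sum>i\<in>UNIV. W $ i $ j else 0)"
      using ideal by (auto intro: sum.cong sum.neutral)
    finally show ?thesis using colsum by (simp add: indicator_matrix_def)
  qed
  then show ?thesis by (simp add: vec_eq_iff)
qed

lemma row_matrix_mult_in_span_rows:
  fixes A :: "real^'m^'k" and B :: "real^'n^'m"
  shows "row k (A ** B) \<in> span (rows B)"
proof -
  have "row k (A ** B) = (\<Sum>i\<in>UNIV. A $ k $ i *\<^sub>R row i B)"
    by (simp add: row_def vec_eq_iff matrix_matrix_mult_def sum_component mult.commute)
  also have "\<dots> \<in> span (rows B)"
    by (intro span_sum span_scale span_base) (auto simp: rows_def)
  finally show ?thesis .
qed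

text \<open>The Gram matrix B B^T has trivial kernel: B B^T x = 0 gives |B^T x|^2 = x \<bullet> B B^T x = 0,
  and B^T is injective because B has full row rank.\<close>

lemma invertible_gram_matrix:
  fixes B :: "real^'n^'r"
  assumes "rank B = CARD('r)"
  shows "invertible (B ** transpose B)"
proof -
  have inj: "inj ((*v) (transpose B))"
    using assms rank_transpose[of B] full_rank_injective by metis
  have "x = 0" if "(B ** transpose B) *v x = 0" for x
  proof -
    have "(transpose B *v x) \<bullet> (transpose B *v x) = x \<bullet> (B *v (transpose B *v x))"
      by (simp add: vector_transpose_matrix transpose_matrix_vector dot_lmul_matrix)
    also have "\<dots> = 0" using that by (metis matrix_vector_mul_assoc inner_zero_right)
    finally have "transpose B *v x = transpose B *v 0" by simp
    with inj show "x = 0" by (rule injD)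
  qed
  then show ?thesis
    using matrix_left_invertible_ker invertible_left_inverse by blast
qed

lemma X_star_mult_eq_of_row_space:
  fixes A :: "real^'r^'k" and B :: "real^'n^'r"
  assumes "invertible (B ** transpose B)"
  shows "X_star (A ** B) B ** B = A ** B"
proof -
  have "X_star (A ** B) B ** B = A ** ((B ** transpose B) ** matrix_inv (B ** transpose B)) ** B"
    by (simp add: X_star_def matrix_mul_assoc)
  then show ?thesis using matrix_inv_right[OF assms] by simp
qed

theorem theorem2:
  fixes lab :: "'n::finite \<Rightarrow> 'k::finite"
    and g :: "'r::finite \<Rightarrow> 'n"
    and W :: "real^'n^'r"
  assumes basis_subset: "inj g"
    and every_class: "\<forall>k. \<exists>i. lab (g i) = k"
    and W_nonneg: "\<forall>i j. W $ i $ j \<ge> 0"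
    and W_colsum_pos: "\<forall>j. (\<Sum>i\<in>UNIV. W $ i $ j) > 0"
    and full_row_rank: "rank (normalized_W W) = CARD('r)"
    and ideal: "\<forall>i j. column (g i) (indicator_matrix lab) \<noteq> column j (indicator_matrix lab)
                       \<longrightarrow> W $ i $ j = 0"
  shows "(\<forall>k. row k (indicator_matrix lab) \<in> span (rows (normalized_W W))) \<and>
         indicator_matrix lab = X_star (indicator_matrix lab) (normalized_W W) ** normalized_W W"
proof -
  have "\<forall>j. (\<Sum>i\<in>UNIV. W $ i $ j) \<noteq> 0" using W_colsum_pos by (metis less_irrefl)
  moreover have "\<forall>i j. lab (g i) \<noteq> lab j \<longrightarrow> W $ i $ j = 0"
    using ideal by (simp add: column_indicator_matrix_eq_iff)
  ultimately have F_eq: "indicator_matrix lab = indicator_matrix (lab \<circ> g) ** normalized_W W"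
    by (rule indicator_matrix_eq_basis_labels_mult)
  have "row k (indicator_matrix lab) \<in> span (rows (normalized_W W))" for k
    unfolding F_eq by (rule row_matrix_mult_in_span_rows)
  moreover have "X_star (indicator_matrix lab) (normalized_W W) ** normalized_W W
      = indicator_matrix lab"
    unfolding F_eq
    by (rule X_star_mult_eq_of_row_space[OF invertible_gram_matrix[OF full_row_rank]])
  ultimately show ?thesis by simp
qed

end
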